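(* Let $P=\langle \mathit{Init}(X),\mathit{Tr}(X,X'),\mathit{Bad}(X)\rangle$ be a safety problem over $\mathcal{T}$, and consider an execution of the Quic3 rules on $P$. Suppose the NewLemma rule is applied to a proof obligation $\langle m,\sigma,i+1\rangle\in\mathcal{Q}$ (with $0\le i<N$ and $\mathcal{F}(\mathit{qi}(Q_i))\wedge m'_{\mathit{sk}}$ unsatisfiable), computing $L'=\textsc{Itp}(\mathcal{F}(\mathit{qi}(Q_i)),m'_{\mathit{sk}})$ and $(\ell,\_)=\mathit{abs}(\mathit{SK},L)$, and adding $(\ell,\sigma)$ to $Q_{i+1}$. Then $$\mathcal{F}(\forall Q_i)\ \Rightarrow\ \forall(\ell').$$
   Context: $\mathcal{T}$ is the combined first-order theory of linear integer arithmetic and arrays, with sorts $\mathsf{int}$ and $\mathsf{array}$ (array indices and values have sort $\mathsf{int}$; $\mathsf{sel}$, $\mathit{store}$ are array read/write). Formulas may contain uninterpreted constants; among them are Skolem constants $\mathit{SK}=\{sk_i: i\in\mathbb{N}\}$ of sort $\mathsf{int}$. Variables of sort $\mathsf{int}$ are named $v_i$. A substitution is a partial sort-respecting map from variables to terms; $\varphi\sigma$ is its application; $\emptyset$ is the empty substitution. The Skolem substitution $\mathit{sk}$ maps $v_i\mapsto sk_i$; $L_{\mathit{sk}}$ denotes $L\,\mathit{sk}$. $\mathit{Const}(\varphi)$, $\mathit{FVars}(\varphi)$ denote uninterpreted constants and free variables; $\forall\varphi$ / $\exists\varphi$ are universal / existential closures over all free variables; $\varphi\Rightarrow\psi$ means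 $\varphi\to\psi$ is valid in $\mathcal{T}$. For a set $U$ of constants and formula $\varphi$, $\mathit{abs}(U,\varphi)=(\psi,\sigma)$: $\psi$ is obtained from $\varphi$ by replacing each constant of $U$ by a variable not free in $\varphi$, each $sk_i\in U$ being replaced by $v_i$; $\mathit{dom}(\sigma)=\mathit{FVars}(\psi)\setminus\mathit{FVars}(\varphi)$, $\psi\sigma=\varphi$, and no constant of $U$ occurs in $\psi$. For ground $\varphi$, $\exists U\cdot\varphi$ denotes $\exists\psi$ with $(\psi,\_)=\mathit{abs}(U,\varphi)$. A partial model-based projection $\textsc{pMbp}(U,\varphi,M)=(\psi,W)$ (for ground $\varphi$, $M\models\varphi$, $U\subseteq\mathit{Const}(\varphi)$) satisfies: $\psi$ is a conjunction of ground literals; $W\subseteq U$, $\mathit{Const}(\psi)\subseteq\mathit{Const}(\varphi)\setminus(U\setminus W)$; $\psi\Rightarrow\exists(U\setminus W)\cdot\varphi$; $M\models\psi$; for fixed $U,\varphi$ only finitely many values arise over all models $M$; $W$ contains no array constant. For ground $A,B$ with $A\wedge B$ unsatisfiable, $\textsc{Itp}(A,B)$ is an interpolant: a ground formula $I$ with $\mathit{Const}(I)\subseteq\mathit{Const}(A)\cap\mathit{Const}(B)$, $A\Rightarrow I$ and $I\Rightarrow\neg B$. A safety problem $\langle \mathit{Init}(X),\mathit{Tr}(X,X'),\mathit{Bad}(X)\rangle$ has a finite set $X$ of constants disjoint from $\mathit{SK}$, primed copy $X'=\{a'\mid a\in X\}$, and quantifier-free ground $\mathit{Init},\mathit{Bad}$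 over $X$ and $\mathit{Tr}$ over $X\cup X'$. $\varphi'$ replaces each $a\in X$ by $a'$ in $\varphi$, and for $L'$ a formula over $X'\cup\mathit{SK}$, $L$ denotes its unprimed version. $\mathcal{F}(A)=(A(X)\wedge\mathit{Tr}(X,X'))\vee\mathit{Init}(X')$. A frame $Q$ is a finite set of pairs $(\ell,\sigma)$, $\ell$ quantifier-free over $X$ with free variables of sort $\mathsf{int}$, $\sigma$ a substitution with $\mathit{FVars}(\ell)\subseteq\mathit{dom}(\sigma)$ and range in $X'\cup\mathit{SK}$; $\forall Q$ is the conjunction of $\forall\ell$ and $\mathit{qi}(Q)$ the conjunction of $\ell\sigma$ over $(\ell,\sigma)\in Q$. A proof obligation (POB) is $\langle m,\sigma,i\rangle$ with $m$ a conjunction of literals over $X$ with free $\mathsf{int}$ variables, $m\sigma$ ground, $i\in\mathbb N$. Quic3 maintains a POB queue $\mathcal Q$, a level $N$ and frames $Q_0,Q_1,\dots$; initially $\mathcal Q=\emptyset$, $N=0$, $Q_0=\{(\mathit{Init},\emptyset)\}$, $Q_i=\emptyset$ for $i>0$. It applies, in any order, the rules: (Safe) if some $i<N$ has $\forall Q_i\subseteq\forall Q_{i+1}$ (as sets of formulas), return Safe; (Cex) if some $\langle m,\sigma,0\rangle\in\mathcal Q$, return Cex; (Unfold) if $\mathit{qi}(Q_N)\Rightarrow\neg\mathit{Bad}$, set $N\gets N+1$; (Candidate) if $m$ is a monomial with $m\Rightarrow\mathit{qi}(Q_N)\wedge\mathit{Bad}$, add $\langle m,\emptyset,N\rangle$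 to $\mathcal Q$; (Predecessor) if $\langle m,\xi,i+1\rangle\in\mathcal Q$ and $M\models\mathit{qi}(Q_i)\wedge\mathit{Tr}\wedge m'_{\mathit{sk}}$, add $\langle\psi,\sigma,i\rangle$ where $(\psi,\sigma)=\mathit{abs}(U,\varphi)$ and $(\varphi,U)=\textsc{pMbp}(X'\cup\mathit{SK},\mathit{Tr}\wedge m'_{\mathit{sk}},M)$; (NewLemma) for $0\le i<N$ and $\langle m,\sigma,i+1\rangle\in\mathcal Q$ with $\mathcal F(\mathit{qi}(Q_i))\wedge m'_{\mathit{sk}}$ unsatisfiable, let $L'=\textsc{Itp}(\mathcal F(\mathit{qi}(Q_i)),m'_{\mathit{sk}})$ and $(\ell,\_)=\mathit{abs}(\mathit{SK},L)$, and add $(\ell,\sigma)$ to $Q_j$ for all $j\le i+1$; (Push) for $0\le i<N$ and $((\varphi\vee\psi),\sigma)\in Q_i$, if $(\varphi,\sigma)\notin Q_{i+1}$, $\mathit{Init}\Rightarrow\forall\varphi$ and $(\forall\varphi)\wedge\forall Q_i\wedge\mathit{qi}(Q_i)\wedge\mathit{Tr}\Rightarrow\forall\varphi'$, add $(\varphi,\sigma)$ to $Q_j$ for all $j\le i+1$. *)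

theory Defs
  imports Main
begin

section \<open>Syntax of the combined theory of linear integer arithmetic and arrays\<close>

text \<open>Constant names. Skolem constants are Sk i (sort int). The state constants X are
 Base names; the primed copy of Base a is Primed a.\<close>
datatype cst = Sk nat | Base string | Primed string

datatype sym = ISym cst | ASym cst

datatype itm = IV nat | IC cst | INum int | IAdd itm itm | ISub itm itm | IMul int itm
  | ISel atm itm
and atm = AV nat | AC cst | AStore atm itm itm

datatype fm = FTrue | FFalse | FEq itm itm | FLe itm itm | FAEq atm atm
  | FNot fm | FAnd fm fm | FOr fm fm | FImp fm fm
  | FAllI nat fm | FExI nat fm | FAllA nat fm | FExA nat fm

section \<open>Semantics (standard model: integers, arrays = functions int to int)\<close>

record interp =
  icst :: "cst \<Rightarrow> int"
  acst :: "cst \<Rightarrow> int \<Rightarrow> int"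

fun ieval :: "interp \<Rightarrow> (nat \<Rightarrow> int) \<Rightarrow> (nat \<Rightarrow> int \<Rightarrow> int) \<Rightarrow> itm \<Rightarrow> int"
and aeval :: "interp \<Rightarrow> (nat \<Rightarrow> int) \<Rightarrow> (nat \<Rightarrow> int \<Rightarrow> int) \<Rightarrow> atm \<Rightarrow> (int \<Rightarrow> int)" where
  "ieval M vi va (IV n) = vi n"
| "ieval M vi va (IC c) = icst M c"
| "ieval M vi va (INum k) = k"
| "ieval M vi va (IAdd s t) = ieval M vi va s + ieval M vi va t"
| "ieval M vi va (ISub s t) = ieval M vi va s - ieval M vi va t"
| "ieval M vi va (IMul k t) = k * ieval M vi va t"
| "ieval M vi va (ISel a t) = aeval M vi va a (ieval M vi va t)"
| "aeval M vi va (AV n) = va n"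
| "aeval M vi va (AC c) = acst M c"
| "aeval M vi va (AStore a t u) = (aeval M vi va a)(ieval M vi va t := ieval M vi va u)"

fun sat :: "interp \<Rightarrow> (nat \<Rightarrow> int) \<Rightarrow> (nat \<Rightarrow> int \<Rightarrow> int) \<Rightarrow> fm \<Rightarrow> bool" where
  "sat M vi va FTrue = True"
| "sat M vi va FFalse = False"
| "sat M vi va (FEq s t) = (ieval M vi va s = ieval M vi va t)"
| "sat M vi va (FLe s t) = (ieval M vi va s \<le> ieval M vi va t)"
| "sat M vi va (FAEq a b) = (aeval M vi va a = aeval M vi va b)"
| "sat M vi va (FNot p) = (\<not> sat M vi va p)"
| "sat M vi va (FAnd p q) = (sat M vi va p \<and> sat M vi va q)"
| "sat M vi va (FOr p q) = (sat M vi va p \<or> sat M vi va q)"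
| "sat M vi va (FImp p q) = (sat M vi va p \<longrightarrow> sat M vi va q)"
| "sat M vi va (FAllI n p) = (\<forall>x. sat M (vi(n := x)) va p)"
| "sat M vi va (FExI n p) = (\<exists>x. sat M (vi(n := x)) va p)"
| "sat M vi va (FAllA n p) = (\<forall>x. sat M vi (va(n := x)) p)"
| "sat M vi va (FExA n p) = (\<exists>x. sat M vi (va(n := x)) p)"

definition valid :: "fm \<Rightarrow> bool" where
  "valid p \<longleftrightarrow> (\<forall>M vi va. sat M vi va p)"

definition entails :: "fm \<Rightarrow> fm \<Rightarrow> bool" where
  "entails p q \<longleftrightarrow> valid (FImp p q)"

definition satisfiable :: "fm \<Rightarrow> bool" where
  "satisfiable p \<longleftrightarrow> (\<exists>M vi va. sat M vi va p)"

fun ivars_i :: "itm \<Rightarrow> nat set" and ivars_a :: "atm \<Rightarrow> nat set" where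
  "ivars_i (IV n) = {n}"
| "ivars_i (IC c) = {}"
| "ivars_i (INum k) = {}"
| "ivars_i (IAdd s t) = ivars_i s \<union> ivars_i t"
| "ivars_i (ISub s t) = ivars_i s \<union> ivars_i t"
| "ivars_i (IMul k t) = ivars_i t"
| "ivars_i (ISel a t) = ivars_a a \<union> ivars_i t"
| "ivars_a (AV n) = {}"
| "ivars_a (AC c) = {}"
| "ivars_a (AStore a t u) = ivars_a a \<union> ivars_i t \<union> ivars_i u"

fun avars_i :: "itm \<Rightarrow> nat set" and avars_a :: "atm \<Rightarrow> nat set" where
  "avars_i (IV n) = {}"
| "avars_i (IC c) = {}"
| "avars_i (INum k) = {}"
| "avars_i (IAdd s t) = avars_i s \<union> avars_i t"
| "avars_i (ISub s t) = avars_i s \<union> avars_i t"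
| "avars_i (IMul k t) = avars_i t"
| "avars_i (ISel a t) = avars_a a \<union> avars_i t"
| "avars_a (AV n) = {n}"
| "avars_a (AC c) = {}"
| "avars_a (AStore a t u) = avars_a a \<union> avars_i t \<union> avars_i u"

fun csts_i :: "itm \<Rightarrow> sym set" and csts_a :: "atm \<Rightarrow> sym set" where
  "csts_i (IV n) = {}"
| "csts_i (IC c) = {ISym c}"
| "csts_i (INum k) = {}"
| "csts_i (IAdd s t) = csts_i s \<union> csts_i t"
| "csts_i (ISub s t) = csts_i s \<union> csts_i t"
| "csts_i (IMul k t) = csts_i t"
| "csts_i (ISel a t) = csts_a a \<union> csts_i t"
| "csts_a (AV n) = {}"
| "csts_a (AC c) = {ASym c}"
| "csts_a (AStore a t u) = csts_a a \<union> csts_i t \<union> csts_i u"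

fun ifv :: "fm \<Rightarrow> nat set" where
  "ifv FTrue = {}"
| "ifv FFalse = {}"
| "ifv (FEq s t) = ivars_i s \<union> ivars_i t"
| "ifv (FLe s t) = ivars_i s \<union> ivars_i t"
| "ifv (FAEq a b) = ivars_a a \<union> ivars_a b"
| "ifv (FNot p) = ifv p"
| "ifv (FAnd p q) = ifv p \<union> ifv q"
| "ifv (FOr p q) = ifv p \<union> ifv q"
| "ifv (FImp p q) = ifv p \<union> ifv q"
| "ifv (FAllI n p) = ifv p - {n}"
| "ifv (FExI n p) = ifv p - {n}"
| "ifv (FAllA n p) = ifv p"
| "ifv (FExA n p) = ifv p"

fun afv :: "fm \<Rightarrow> nat set" where
  "afv FTrue = {}"
| "afv FFalse = {}"
| "afv (FEq s t) = avars_i s \<union> avars_i t"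
| "afv (FLe s t) = avars_i s \<union> avars_i t"
| "afv (FAEq a b) = avars_a a \<union> avars_a b"
| "afv (FNot p) = afv p"
| "afv (FAnd p q) = afv p \<union> afv q"
| "afv (FOr p q) = afv p \<union> afv q"
| "afv (FImp p q) = afv p \<union> afv q"
| "afv (FAllI n p) = afv p"
| "afv (FExI n p) = afv p"
| "afv (FAllA n p) = afv p - {n}"
| "afv (FExA n p) = afv p - {n}"

fun csts :: "fm \<Rightarrow> sym set" where
  "csts FTrue = {}"
| "csts FFalse = {}"
| "csts (FEq s t) = csts_i s \<union> csts_i t"
| "csts (FLe s t) = csts_i s \<union> csts_i t"
| "csts (FAEq a b) = csts_a a \<union> csts_a b"
| "csts (FNot p) = csts p"
| "csts (FAnd p q) = csts p \<union> csts q"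
| "csts (FOr p q) = csts p \<union> csts q"
| "csts (FImp p q) = csts p \<union> csts q"
| "csts (FAllI n p) = csts p"
| "csts (FExI n p) = csts p"
| "csts (FAllA n p) = csts p"
| "csts (FExA n p) = csts p"

fun qf :: "fm \<Rightarrow> bool" where
  "qf (FNot p) = qf p"
| "qf (FAnd p q) = (qf p \<and> qf q)"
| "qf (FOr p q) = (qf p \<and> qf q)"
| "qf (FImp p q) = (qf p \<and> qf q)"
| "qf (FAllI n p) = False"
| "qf (FExI n p) = False"
| "qf (FAllA n p) = False"
| "qf (FExA n p) = False"
| "qf _ = True"

definition ground :: "fm \<Rightarrow> bool" where
  "ground p \<longleftrightarrow> qf p \<and> ifv p = {} \<and> afv p = {}"

fun is_atom :: "fm \<Rightarrow> bool" where
  "is_atom FTrue = True"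
| "is_atom FFalse = True"
| "is_atom (FEq s t) = True"
| "is_atom (FLe s t) = True"
| "is_atom (FAEq a b) = True"
| "is_atom _ = False"

fun is_lit :: "fm \<Rightarrow> bool" where
  "is_lit (FNot p) = is_atom p"
| "is_lit p = is_atom p"

fun is_mono :: "fm \<Rightarrow> bool" where
  "is_mono (FAnd p q) = (is_mono p \<and> is_mono q)"
| "is_mono p = is_lit p"

type_synonym subst = "nat \<Rightarrow> itm option"

fun isub :: "subst \<Rightarrow> itm \<Rightarrow> itm" and asub :: "subst \<Rightarrow> atm \<Rightarrow> atm" where
  "isub \<sigma> (IV n) = (case \<sigma> n of Some t \<Rightarrow> t | None \<Rightarrow> IV n)"
| "isub \<sigma> (IC c) = IC c"
| "isub \<sigma> (INum k) = INum k"
| "isub \<sigma> (IAdd s t) = IAdd (isub \<sigma> s) (isub \<sigma> t)"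
| "isub \<sigma> (ISub s t) = ISub (isub \<sigma> s) (isub \<sigma> t)"
| "isub \<sigma> (IMul k t) = IMul k (isub \<sigma> t)"
| "isub \<sigma> (ISel a t) = ISel (asub \<sigma> a) (isub \<sigma> t)"
| "asub \<sigma> (AV n) = AV n"
| "asub \<sigma> (AC c) = AC c"
| "asub \<sigma> (AStore a t u) = AStore (asub \<sigma> a) (isub \<sigma> t) (isub \<sigma> u)"

fun fsub :: "subst \<Rightarrow> fm \<Rightarrow> fm" where
  "fsub \<sigma> FTrue = FTrue"
| "fsub \<sigma> FFalse = FFalse"
| "fsub \<sigma> (FEq s t) = FEq (isub \<sigma> s) (isub \<sigma> t)"
| "fsub \<sigma> (FLe s t) = FLe (isub \<sigma> s) (isub \<sigma> t)"
| "fsub \<sigma> (FAEq a b) = FAEq (asub \<sigma> a) (asub \<sigma> b)"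
| "fsub \<sigma> (FNot p) = FNot (fsub \<sigma> p)"
| "fsub \<sigma> (FAnd p q) = FAnd (fsub \<sigma> p) (fsub \<sigma> q)"
| "fsub \<sigma> (FOr p q) = FOr (fsub \<sigma> p) (fsub \<sigma> q)"
| "fsub \<sigma> (FImp p q) = FImp (fsub \<sigma> p) (fsub \<sigma> q)"
| "fsub \<sigma> (FAllI n p) = FAllI n (fsub (\<sigma>(n := None)) p)"
| "fsub \<sigma> (FExI n p) = FExI n (fsub (\<sigma>(n := None)) p)"
| "fsub \<sigma> (FAllA n p) = FAllA n (fsub \<sigma> p)"
| "fsub \<sigma> (FExA n p) = FExA n (fsub \<sigma> p)"

definition SK :: "cst set" where "SK = range Sk"

definition sk :: subst where "sk = (\<lambda>n. Some (IC (Sk n)))"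

fun cmap_i :: "(cst \<Rightarrow> itm) \<Rightarrow> (cst \<Rightarrow> atm) \<Rightarrow> itm \<Rightarrow> itm"
and cmap_a :: "(cst \<Rightarrow> itm) \<Rightarrow> (cst \<Rightarrow> atm) \<Rightarrow> atm \<Rightarrow> atm" where
  "cmap_i f g (IV n) = IV n"
| "cmap_i f g (IC c) = f c"
| "cmap_i f g (INum k) = INum k"
| "cmap_i f g (IAdd s t) = IAdd (cmap_i f g s) (cmap_i f g t)"
| "cmap_i f g (ISub s t) = ISub (cmap_i f g s) (cmap_i f g t)"
| "cmap_i f g (IMul k t) = IMul k (cmap_i f g t)"
| "cmap_i f g (ISel a t) = ISel (cmap_a f g a) (cmap_i f g t)"
| "cmap_a f g (AV n) = AV n"
| "cmap_a f g (AC c) = g c"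
| "cmap_a f g (AStore a t u) = AStore (cmap_a f g a) (cmap_i f g t) (cmap_i f g u)"

fun cmap :: "(cst \<Rightarrow> itm) \<Rightarrow> (cst \<Rightarrow> atm) \<Rightarrow> fm \<Rightarrow> fm" where
  "cmap f g FTrue = FTrue"
| "cmap f g FFalse = FFalse"
| "cmap f g (FEq s t) = FEq (cmap_i f g s) (cmap_i f g t)"
| "cmap f g (FLe s t) = FLe (cmap_i f g s) (cmap_i f g t)"
| "cmap f g (FAEq a b) = FAEq (cmap_a f g a) (cmap_a f g b)"
| "cmap f g (FNot p) = FNot (cmap f g p)"
| "cmap f g (FAnd p q) = FAnd (cmap f g p) (cmap f g q)"
| "cmap f g (FOr p q) = FOr (cmap f g p) (cmap f g q)"
| "cmap f g (FImp p q) = FImp (cmap f g p) (cmap f g q)"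
| "cmap f g (FAllI n p) = FAllI n (cmap f g p)"
| "cmap f g (FExI n p) = FExI n (cmap f g p)"
| "cmap f g (FAllA n p) = FAllA n (cmap f g p)"
| "cmap f g (FExA n p) = FExA n (cmap f g p)"

fun prime_cst :: "cst \<Rightarrow> cst" where
  "prime_cst (Base a) = Primed a"
| "prime_cst c = c"

fun unprime_cst :: "cst \<Rightarrow> cst" where
  "unprime_cst (Primed a) = Base a"
| "unprime_cst c = c"

fun psym :: "sym \<Rightarrow> sym" where
  "psym (ISym c) = ISym (prime_cst c)"
| "psym (ASym c) = ASym (prime_cst c)"

definition primed :: "sym set \<Rightarrow> sym set" where
  "primed X = psym ` X"

definition prime_fm :: "sym set \<Rightarrow> fm \<Rightarrow> fm" where
  "prime_fm X p = cmap (\<lambda>c. IC (if ISym c \<in> X then prime_cst c else c))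
                       (\<lambda>c. AC (if ASym c \<in> X then prime_cst c else c)) p"

definition unprime_fm :: "sym set \<Rightarrow> fm \<Rightarrow> fm" where
  "unprime_fm X p = cmap (\<lambda>c. IC (if ISym c \<in> primed X then unprime_cst c else c))
                         (\<lambda>c. AC (if ASym c \<in> primed X then unprime_cst c else c)) p"

definition conjs :: "fm set \<Rightarrow> fm" where
  "conjs S = foldr FAnd (SOME xs. set xs = S) FTrue"

definition close_all :: "fm \<Rightarrow> fm" where
  "close_all p = foldr FAllI (SOME xs. set xs = ifv p)
                   (foldr FAllA (SOME ys. set ys = afv p) p)"

text \<open>abs_rel U phi psi sigma: (psi, sigma) is a legitimate value of abs(U, phi).\<close>
definition abs_rel :: "cst set \<Rightarrow> fm \<Rightarrow> fm \<Rightarrow> subst \<Rightarrow> bool" where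
  "abs_rel U p q \<sigma> \<longleftrightarrow>
     (\<exists>r :: cst \<Rightarrow> nat.
        (\<forall>c\<in>U. r c \<notin> ifv p) \<and>
        (\<forall>i. Sk i \<in> U \<longrightarrow> r (Sk i) = i) \<and>
        q = cmap (\<lambda>c. if c \<in> U then IV (r c) else IC c) AC p) \<and>
     dom \<sigma> = ifv q - ifv p \<and>
     fsub \<sigma> q = p \<and>
     (\<forall>c\<in>U. ISym c \<notin> csts q)"

definition safety_problem :: "sym set \<Rightarrow> fm \<Rightarrow> fm \<Rightarrow> fm \<Rightarrow> bool" where
  "safety_problem X Init Tr Bad \<longleftrightarrow>
     finite X \<and> (\<forall>s\<in>X. \<exists>a. s = ISym (Base a) \<or> s = ASym (Base a)) \<and>
     ground Init \<and> csts Init \<subseteq> X \<and>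
     ground Bad \<and> csts Bad \<subseteq> X \<and>
     ground Tr \<and> csts Tr \<subseteq> X \<union> primed X"

definition is_frame :: "sym set \<Rightarrow> (fm \<times> subst) set \<Rightarrow> bool" where
  "is_frame X Q \<longleftrightarrow> finite Q \<and>
     (\<forall>(l, \<sigma>)\<in>Q. qf l \<and> csts l \<subseteq> X \<and> afv l = {} \<and> ifv l \<subseteq> dom \<sigma> \<and>
        (\<forall>t\<in>ran \<sigma>. \<exists>c. t = IC c \<and> (ISym c \<in> primed X \<or> c \<in> SK)))"

definition is_pob :: "sym set \<Rightarrow> fm \<Rightarrow> subst \<Rightarrow> bool" where
  "is_pob X m \<sigma> \<longleftrightarrow> is_mono m \<and> csts m \<subseteq> X \<and> afv m = {} \<and> ground (fsub \<sigma> m)"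

definition qi :: "(fm \<times> subst) set \<Rightarrow> fm" where
  "qi Q = conjs ((\<lambda>(l, \<sigma>). fsub \<sigma> l) ` Q)"

definition forallQ :: "(fm \<times> subst) set \<Rightarrow> fm" where
  "forallQ Q = conjs ((\<lambda>(l, \<sigma>). close_all l) ` Q)"

definition Fop :: "sym set \<Rightarrow> fm \<Rightarrow> fm \<Rightarrow> fm \<Rightarrow> fm" where
  "Fop X Init Tr A = FOr (FAnd A Tr) (prime_fm X Init)"

text \<open>I is a legitimate value of Itp(A, B).\<close>
definition is_itp :: "fm \<Rightarrow> fm \<Rightarrow> fm \<Rightarrow> bool" where
  "is_itp A B I \<longleftrightarrow> ground I \<and> csts I \<subseteq> csts A \<inter> csts B \<and>
     entails A I \<and> entails I (FNot B)"

end

theory Submission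
  imports Defs
begin

text \<open>Fix a model M of F(\<forall>Q) and values vi for the free variables of l'. Reinterpreting each
  Skolem constant sk_j as vi j changes neither Init, Tr nor the lemmas of Q, none of which mention
  Skolem constants, so the new model still satisfies F(\<forall>Q); as the closed lemmas imply each of
  their instances, it satisfies F(qi(Q)) and hence the interpolant L'. Finally l' is L' with
  every sk_j replaced by the variable v_j, so M satisfies l' under vi exactly when the
  reinterpreted model satisfies L'.\<close>

lemma eval_cmap:
  "ieval M vi va (cmap_i f g t) =
     ieval (M\<lparr>icst := \<lambda>c. ieval M vi va (f c), acst := \<lambda>c. aeval M vi va (g c)\<rparr>) vi va t"
  "aeval M vi va (cmap_a f g a) =
     aeval (M\<lparr>icst := \<lambda>c. ieval M vi va (f c), acst := \<lambda>c. aeval M vi va (g c)\<rparr>) vi va a"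
  by (induction t and a) auto

lemma sat_cmap:
  "qf p \<Longrightarrow> sat M vi va (cmap f g p) =
     sat (M\<lparr>icst := \<lambda>c. ieval M vi va (f c), acst := \<lambda>c. aeval M vi va (g c)\<rparr>) vi va p"
  by (induction p) (auto simp: eval_cmap)

lemma eval_sub:
  "ieval M vi va (isub \<sigma> t) = ieval M (\<lambda>n. case \<sigma> n of Some s \<Rightarrow> ieval M vi va s | None \<Rightarrow> vi n) va t"
  "aeval M vi va (asub \<sigma> a) = aeval M (\<lambda>n. case \<sigma> n of Some s \<Rightarrow> ieval M vi va s | None \<Rightarrow> vi n) va a"
  by (induction t and a) (auto split: option.splits)

lemma sat_fsub:
  "qf p \<Longrightarrow> sat M vi va (fsub \<sigma> p) = sat M (\<lambda>n. case \<sigma> n of Some s \<Rightarrow> ieval M vi va s | None \<Rightarrow> vi n) va p"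
  by (induction p) (auto simp: eval_sub)

definition agree_on :: "sym set \<Rightarrow> interp \<Rightarrow> interp \<Rightarrow> bool" where
  "agree_on S M M' \<longleftrightarrow>
     (\<forall>c. (ISym c \<in> S \<longrightarrow> icst M c = icst M' c) \<and> (ASym c \<in> S \<longrightarrow> acst M c = acst M' c))"

lemma agree_on_Un: "agree_on (S \<union> T) M M' \<longleftrightarrow> agree_on S M M' \<and> agree_on T M M'"
  by (auto simp: agree_on_def)

lemma agree_on_mono: "agree_on S M M' \<Longrightarrow> T \<subseteq> S \<Longrightarrow> agree_on T M M'"
  by (auto simp: agree_on_def)

lemma eval_cong:
  "agree_on (csts_i t) M M' \<Longrightarrow> (\<forall>n\<in>ivars_i t. vi n = vi' n) \<Longrightarrow> (\<forall>n\<in>avars_i t. va n = va' n) \<Longrightarrow>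
     ieval M vi va t = ieval M' vi' va' t"
  "agree_on (csts_a a) M M' \<Longrightarrow> (\<forall>n\<in>ivars_a a. vi n = vi' n) \<Longrightarrow> (\<forall>n\<in>avars_a a. va n = va' n) \<Longrightarrow>
     aeval M vi va a = aeval M' vi' va' a"
  by (induction t and a) (auto simp: agree_on_def)

lemma sat_cong:
  "agree_on (csts p) M M' \<Longrightarrow> (\<forall>n\<in>ifv p. vi n = vi' n) \<Longrightarrow> (\<forall>n\<in>afv p. va n = va' n) \<Longrightarrow>
     sat M vi va p = sat M' vi' va' p"
proof (induction p arbitrary: vi vi' va va')
  case (FEq s t)
  then have "ieval M vi va s = ieval M' vi' va' s" "ieval M vi va t = ieval M' vi' va' t"
    using eval_cong by (simp_all add: agree_on_Un)
  then show ?case by simp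
next
  case (FLe s t)
  then have "ieval M vi va s = ieval M' vi' va' s" "ieval M vi va t = ieval M' vi' va' t"
    using eval_cong by (simp_all add: agree_on_Un)
  then show ?case by simp
next
  case (FAEq a b)
  then have "aeval M vi va a = aeval M' vi' va' a" "aeval M vi va b = aeval M' vi' va' b"
    using eval_cong by (simp_all add: agree_on_Un)
  then show ?case by simp
next
  case (FAnd p q)
  then have "sat M vi va p = sat M' vi' va' p" "sat M vi va q = sat M' vi' va' q"
    by (simp_all add: agree_on_Un)
  then show ?case by simp
next
  case (FOr p q)
  then have "sat M vi va p = sat M' vi' va' p" "sat M vi va q = sat M' vi' va' q"
    by (simp_all add: agree_on_Un)
  then show ?case by simp
next
  case (FImp p q)
  then have "sat M vi va p = sat M' vi' va' p" "sat M vi va q = sat M' vi' va' q"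
    by (simp_all add: agree_on_Un)
  then show ?case by simp
next
  case (FAllI n p)
  have "sat M (vi(n := x)) va p = sat M' (vi'(n := x)) va' p" for x
    using FAllI.prems by (intro FAllI.IH) auto
  then show ?case by simp
next
  case (FExI n p)
  have "sat M (vi(n := x)) va p = sat M' (vi'(n := x)) va' p" for x
    using FExI.prems by (intro FExI.IH) auto
  then show ?case by simp
next
  case (FAllA n p)
  have "sat M vi (va(n := x)) p = sat M' vi' (va'(n := x)) p" for x
    using FAllA.prems by (intro FAllA.IH) auto
  then show ?case by simp
next
  case (FExA n p)
  have "sat M vi (va(n := x)) p = sat M' vi' (va'(n := x)) p" for x
    using FExA.prems by (intro FExA.IH) auto
  then show ?case by simp
qed simp_all

lemma sat_ground_cong:
  "ground p \<Longrightarrow> agree_on S M M' \<Longrightarrow> csts p \<subseteq> S \<Longrightarrow> sat M vi va p = sat M' vi' va' p"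
  by (rule sat_cong) (auto simp: ground_def intro: agree_on_mono)

lemma finite_ivars: "finite (ivars_i t)" "finite (ivars_a a)"
  by (induction t and a) auto

lemma finite_avars: "finite (avars_i t)" "finite (avars_a a)"
  by (induction t and a) auto

lemma finite_fv: "finite (ifv p)" "finite (afv p)"
  by (induction p) (auto simp: finite_ivars finite_avars)

lemma sat_foldr_FAllI:
  "sat M vi va (foldr FAllI xs p) \<longleftrightarrow> (\<forall>vi'. (\<forall>n. n \<notin> set xs \<longrightarrow> vi' n = vi n) \<longrightarrow> sat M vi' va p)"
proof (induction xs arbitrary: vi)
  case Nil then show ?case by (simp flip: fun_eq_iff)
next
  case (Cons x xs) show ?case
    by (simp add: Cons.IH) metis
qed

lemma sat_foldr_FAllA:
  "sat M vi va (foldr FAllA xs p) \<longleftrightarrow> (\<forall>va'. (\<forall>n. n \<notin> set xs \<longrightarrow> va' n = va n) \<longrightarrow> sat M vi va' p)"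
proof (induction xs arbitrary: va)
  case Nil then show ?case by (simp flip: fun_eq_iff)
next
  case (Cons x xs) show ?case
    by (simp add: Cons.IH) metis
qed

lemma set_some_list: "finite S \<Longrightarrow> set (SOME xs. set xs = S) = S"
  by (metis (mono_tags) finite_list someI_ex)

lemma sat_close_all: "sat M vi va (close_all p) \<longleftrightarrow> (\<forall>vi va. sat M vi va p)"
proof
  assume closed: "sat M vi va (close_all p)"
  show "\<forall>vi' va'. sat M vi' va' p"
  proof (intro allI)
    fix vi' va'
    let ?vi = "\<lambda>n. if n \<in> ifv p then vi' n else vi n"
    let ?va = "\<lambda>n. if n \<in> afv p then va' n else va n"
    have "sat M ?vi ?va p"
      using closed by (simp add: close_all_def sat_foldr_FAllI sat_foldr_FAllA set_some_list finite_fv)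
    then show "sat M vi' va' p"
      by (subst sat_cong[where M' = M and vi' = ?vi and va' = ?va]) (auto simp: agree_on_def)
  qed
qed (simp add: close_all_def sat_foldr_FAllI sat_foldr_FAllA)

lemma sat_conjs: "finite S \<Longrightarrow> sat M vi va (conjs S) \<longleftrightarrow> (\<forall>p\<in>S. sat M vi va p)"
proof -
  have "sat M vi va (foldr FAnd xs FTrue) \<longleftrightarrow> (\<forall>p\<in>set xs. sat M vi va p)" for xs
    by (induction xs) auto
  then show "finite S \<Longrightarrow> ?thesis" by (simp add: conjs_def set_some_list)
qed

lemma qf_cmap: "qf (cmap f g p) = qf p"
  by (induction p) auto

lemma ivars_cmap_rename:
  "ivars_i (cmap_i (\<lambda>c. IC (h c)) (\<lambda>c. AC (k c)) t) = ivars_i t"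
  "ivars_a (cmap_a (\<lambda>c. IC (h c)) (\<lambda>c. AC (k c)) a) = ivars_a a"
  by (induction t and a) auto

lemma avars_cmap_rename:
  "avars_i (cmap_i (\<lambda>c. IC (h c)) (\<lambda>c. AC (k c)) t) = avars_i t"
  "avars_a (cmap_a (\<lambda>c. IC (h c)) (\<lambda>c. AC (k c)) a) = avars_a a"
  by (induction t and a) auto

lemma fv_cmap_rename:
  "ifv (cmap (\<lambda>c. IC (h c)) (\<lambda>c. AC (k c)) p) = ifv p"
  "afv (cmap (\<lambda>c. IC (h c)) (\<lambda>c. AC (k c)) p) = afv p"
  by (induction p) (auto simp: ivars_cmap_rename avars_cmap_rename)

lemma ground_prime_fm: "ground p \<Longrightarrow> ground (prime_fm X p)"
  by (simp add: ground_def prime_fm_def qf_cmap fv_cmap_rename)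

lemma csts_cmap_subset:
  "(\<forall>c. ISym c \<in> csts_i t \<longrightarrow> csts_i (f c) \<subseteq> S) \<Longrightarrow> (\<forall>c. ASym c \<in> csts_i t \<longrightarrow> csts_a (g c) \<subseteq> S) \<Longrightarrow>
     csts_i (cmap_i f g t) \<subseteq> S"
  "(\<forall>c. ISym c \<in> csts_a a \<longrightarrow> csts_i (f c) \<subseteq> S) \<Longrightarrow> (\<forall>c. ASym c \<in> csts_a a \<longrightarrow> csts_a (g c) \<subseteq> S) \<Longrightarrow>
     csts_a (cmap_a f g a) \<subseteq> S"
  by (induction t and a) auto

lemma csts_cmap_subset_fm:
  "(\<forall>c. ISym c \<in> csts p \<longrightarrow> csts_i (f c) \<subseteq> S) \<Longrightarrow> (\<forall>c. ASym c \<in> csts p \<longrightarrow> csts_a (g c) \<subseteq> S) \<Longrightarrow>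
     csts (cmap f g p) \<subseteq> S"
  by (induction p) (auto simp: csts_cmap_subset)

lemma csts_prime_fm: "csts p \<subseteq> X \<Longrightarrow> csts (prime_fm X p) \<subseteq> primed X"
  unfolding prime_fm_def
proof (rule csts_cmap_subset_fm)
  show "\<forall>c. ISym c \<in> csts p \<longrightarrow> csts_i (IC (if ISym c \<in> X then prime_cst c else c)) \<subseteq> primed X"
    if "csts p \<subseteq> X" using that by (auto simp: primed_def intro!: image_eqI[where x = "ISym _"])
  show "\<forall>c. ASym c \<in> csts p \<longrightarrow> csts_a (AC (if ASym c \<in> X then prime_cst c else c)) \<subseteq> primed X"
    if "csts p \<subseteq> X" using that by (auto simp: primed_def intro!: image_eqI[where x = "ASym _"])
qed

lemma csts_sub:
  "csts_i (isub \<sigma> t) \<subseteq> csts_i t \<union> \<Union>(csts_i ` ran \<sigma>)"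
  "csts_a (asub \<sigma> a) \<subseteq> csts_a a \<union> \<Union>(csts_i ` ran \<sigma>)"
  by (induction t and a) (auto split: option.splits intro: ranI)

lemma ran_fun_upd_None_subset: "ran (\<sigma>(n := None)) \<subseteq> ran \<sigma>"
  by (auto simp: ran_def)

lemma csts_fsub: "csts (fsub \<sigma> p) \<subseteq> csts p \<union> \<Union>(csts_i ` ran \<sigma>)"
proof (induction p arbitrary: \<sigma>)
  case (FEq s t) show ?case using csts_sub(1)[of \<sigma> s] csts_sub(1)[of \<sigma> t] by auto
next
  case (FLe s t) show ?case using csts_sub(1)[of \<sigma> s] csts_sub(1)[of \<sigma> t] by auto
next
  case (FAEq a b) show ?case using csts_sub(2)[of \<sigma> a] csts_sub(2)[of \<sigma> b] by auto
next
  case (FAllI n p) show ?case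
    using ran_fun_upd_None_subset[of \<sigma> n] FAllI.IH[of "\<sigma>(n := None)"]
    by (simp only: fsub.simps csts.simps) blast
next
  case (FExI n p) show ?case
    using ran_fun_upd_None_subset[of \<sigma> n] FExI.IH[of "\<sigma>(n := None)"]
    by (simp only: fsub.simps csts.simps) blast
qed auto

lemma csts_sk_prime_fm: "csts m \<subseteq> X \<Longrightarrow> csts (fsub sk (prime_fm X m)) \<subseteq> primed X \<union> ISym ` SK"
  using csts_fsub[of sk "prime_fm X m"] csts_prime_fm[of m X] by (auto simp: sk_def SK_def ran_def)

lemma cmap_cmap:
  "cmap_i f g (cmap_i f' g' t) = cmap_i (\<lambda>c. cmap_i f g (f' c)) (\<lambda>c. cmap_a f g (g' c)) t"
  "cmap_a f g (cmap_a f' g' a) = cmap_a (\<lambda>c. cmap_i f g (f' c)) (\<lambda>c. cmap_a f g (g' c)) a"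
  by (induction t and a) auto

lemma cmap_cmap_fm:
  "cmap f g (cmap f' g' p) = cmap (\<lambda>c. cmap_i f g (f' c)) (\<lambda>c. cmap_a f g (g' c)) p"
  by (induction p) (auto simp: cmap_cmap)

lemma cmap_cong:
  "(\<forall>c. ISym c \<in> csts_i t \<longrightarrow> f c = f' c) \<Longrightarrow> (\<forall>c. ASym c \<in> csts_i t \<longrightarrow> g c = g' c) \<Longrightarrow>
     cmap_i f g t = cmap_i f' g' t"
  "(\<forall>c. ISym c \<in> csts_a a \<longrightarrow> f c = f' c) \<Longrightarrow> (\<forall>c. ASym c \<in> csts_a a \<longrightarrow> g c = g' c) \<Longrightarrow>
     cmap_a f g a = cmap_a f' g' a"
  by (induction t and a) auto

lemma cmap_cong_fm:
  "(\<forall>c. ISym c \<in> csts p \<longrightarrow> f c = f' c) \<Longrightarrow> (\<forall>c. ASym c \<in> csts p \<longrightarrow> g c = g' c) \<Longrightarrow>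
     cmap f g p = cmap f' g' p"
  by (induction p) (auto intro: cmap_cong)

definition base_syms :: "sym set \<Rightarrow> bool" where
  "base_syms X \<longleftrightarrow> (\<forall>s\<in>X. \<exists>a. s = ISym (Base a) \<or> s = ASym (Base a))"

lemma safety_problem_base_syms: "safety_problem X Init Tr Bad \<Longrightarrow> base_syms X"
  by (simp add: safety_problem_def base_syms_def)

lemma mem_primedE:
  assumes "base_syms X" and "s \<in> primed X"
  obtains a where "s = ISym (Primed a)" "ISym (Base a) \<in> X"
        | a where "s = ASym (Primed a)" "ASym (Base a) \<in> X"
  using assms by (fastforce simp: base_syms_def primed_def)

lemma Sk_notin_base_syms: "base_syms X \<Longrightarrow> ISym (Sk i) \<notin> X \<union> primed X"
  using mem_primedE[of X "ISym (Sk i)"] by (auto simp: base_syms_def)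

definition sk_interp :: "interp \<Rightarrow> (nat \<Rightarrow> int) \<Rightarrow> interp" where
  "sk_interp M vi = M\<lparr>icst := \<lambda>c. case c of Sk i \<Rightarrow> vi i | _ \<Rightarrow> icst M c\<rparr>"

lemma agree_on_sk_interp: "(\<And>i. ISym (Sk i) \<notin> S) \<Longrightarrow> agree_on S M (sk_interp M vi)"
  by (auto simp: agree_on_def sk_interp_def split: cst.split)

lemma sat_qi_if_forallQ:
  assumes frame: "is_frame X Q" and agree: "agree_on X M M'" and "sat M vi va (forallQ Q)"
  shows "sat M' vi' va' (qi Q)"
proof -
  have fin: "finite Q" using frame by (simp add: is_frame_def)
  have "sat M' vi' va' (fsub \<sigma> l)" if "(l, \<sigma>) \<in> Q" for l \<sigma>
  proof -
    have l: "qf l" "csts l \<subseteq> X" using frame that by (auto simp: is_frame_def)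
    have "\<forall>vi va. sat M vi va l"
      using assms(3) that fin by (force simp: forallQ_def sat_conjs sat_close_all)
    then have "\<forall>vi va. sat M' vi va l"
      using sat_cong[OF agree_on_mono[OF agree l(2)]] by blast
    then show ?thesis by (simp add: sat_fsub l(1))
  qed
  then show ?thesis using fin by (auto simp: qi_def sat_conjs)
qed

lemma sat_Fop_qi_if_forallQ:
  assumes problem: "safety_problem X Init Tr Bad" and frame: "is_frame X Q"
    and agree: "agree_on (X \<union> primed X) M M'" and sat_F: "sat M vi va (Fop X Init Tr (forallQ Q))"
  shows "sat M' vi' va' (Fop X Init Tr (qi Q))"
proof -
  have Tr: "sat M vi va Tr = sat M' vi' va' Tr"
    using problem by (intro sat_ground_cong[OF _ agree]) (auto simp: safety_problem_def)
  have Init: "sat M vi va (prime_fm X Init) = sat M' vi' va' (prime_fm X Init)"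
    using problem by (intro sat_ground_cong[OF _ agree] ground_prime_fm)
      (auto simp: safety_problem_def dest: csts_prime_fm)
  have "sat M vi va (forallQ Q) \<Longrightarrow> sat M' vi' va' (qi Q)"
    using frame agree_on_mono[OF agree] by (blast intro: sat_qi_if_forallQ)
  then show ?thesis using sat_F Tr Init by (auto simp: Fop_def)
qed

definition sk_to_var :: "cst \<Rightarrow> itm" where
  "sk_to_var c = (case c of Sk i \<Rightarrow> IV i | _ \<Rightarrow> IC c)"

lemma sat_cmap_sk_to_var:
  assumes "qf p"
  shows "sat M vi va (cmap sk_to_var AC p) = sat (sk_interp M vi) vi va p"
proof -
  have "(\<lambda>c. ieval M vi va (sk_to_var c)) = (\<lambda>c. case c of Sk i \<Rightarrow> vi i | _ \<Rightarrow> icst M c)"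
    by (auto simp: sk_to_var_def split: cst.split)
  then have interp: "M\<lparr>icst := \<lambda>c. ieval M vi va (sk_to_var c), acst := \<lambda>c. aeval M vi va (AC c)\<rparr>
      = sk_interp M vi"
    by (simp add: sk_interp_def)
  show ?thesis by (simp only: sat_cmap[OF assms] interp)
qed

lemma prime_fm_abs_unprime:
  assumes X_base: "base_syms X"
    and csts_L': "csts L' \<subseteq> primed X \<union> ISym ` SK"
    and "abs_rel SK (unprime_fm X L') l \<sigma>"
  shows "prime_fm X l = cmap sk_to_var AC L'"
proof -
  obtain r where r: "\<And>i. r (Sk i) = i"
    and l: "l = cmap (\<lambda>c. if c \<in> SK then IV (r c) else IC c) AC (unprime_fm X L')"
    using assms(3) by (auto simp: abs_rel_def SK_def)
  have primed_int: "\<exists>a. c = Primed a \<and> ISym (Base a) \<in> X" if "ISym c \<in> primed X" for c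
    using that by (auto elim: mem_primedE[OF X_base])
  have primed_arr: "\<exists>a. c = Primed a \<and> ASym (Base a) \<in> X" if "ASym c \<in> primed X" for c
    using that by (auto elim: mem_primedE[OF X_base])
  show ?thesis
    unfolding l prime_fm_def unprime_fm_def cmap_cmap_fm
    by (intro cmap_cong_fm allI impI)
      (auto dest!: csts_L'[THEN subsetD] primed_int primed_arr
        simp: SK_def sk_to_var_def r Sk_notin_base_syms[OF X_base])
qed

theorem lemma2:
  assumes "safety_problem X Init Tr Bad"
    and "is_frame X Qi"
    and "is_pob X m \<sigma>"
    and "\<not> satisfiable (FAnd (Fop X Init Tr (qi Qi)) (fsub sk (prime_fm X m)))"
    and "is_itp (Fop X Init Tr (qi Qi)) (fsub sk (prime_fm X m)) L'"
    and "abs_rel SK (unprime_fm X L') l \<sigma>'"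
  shows "entails (Fop X Init Tr (forallQ Qi)) (close_all (prime_fm X l))"
proof -
  have X_base: "base_syms X" using assms(1) by (rule safety_problem_base_syms)
  have itp: "ground L'" "csts L' \<subseteq> csts (fsub sk (prime_fm X m))" "entails (Fop X Init Tr (qi Qi)) L'"
    using assms(5) by (auto simp: is_itp_def)
  have "csts L' \<subseteq> primed X \<union> ISym ` SK"
    using itp(2) csts_sk_prime_fm[of m X] assms(3) by (auto simp: is_pob_def)
  then have l': "prime_fm X l = cmap sk_to_var AC L'"
    using X_base assms(6) by (intro prime_fm_abs_unprime)
  have "sat M vi va (prime_fm X l)" if F: "sat M vi0 va0 (Fop X Init Tr (forallQ Qi))" for M vi0 va0 vi va
  proof -
    have "sat (sk_interp M vi) vi va (Fop X Init Tr (qi Qi))"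
      using assms(1,2) agree_on_sk_interp[OF Sk_notin_base_syms[OF X_base]] F
      by (rule sat_Fop_qi_if_forallQ)
    then have "sat (sk_interp M vi) vi va L'"
      using itp(3) by (simp add: entails_def valid_def)
    then show ?thesis
      using itp(1) by (simp add: l' sat_cmap_sk_to_var ground_def)
  qed
  then show ?thesis by (simp add: entails_def valid_def sat_close_all)
qed

end
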